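(* Let $A$ be a commutative noetherian local ring and let $x,y\in A$ be a regular exact pair of zero divisors. Let $a\in A$ be weakly regular on the $A$-module $A/(x,y)$, and let $b\in A$ be a non-unit. Then (a) the $A$-modules $G_a$ and $G_{ab}$ are not isomorphic, and (b) the $A$-modules $H_a$ and $H_{ab}$ are not isomorphic.
   Context: Two non-units $x,y\in A$ form an exact pair of zero divisors if $\operatorname{Ann}_A(x)=(y)$ and $\operatorname{Ann}_A(y)=(x)$; such a pair is regular if $(x)\cap(y)=0$. An element $a\in A$ is weakly regular on a module $M$ if multiplication by $a$ on $M$ is injective. For $a\in A$, let $\gamma_a=\begin{pmatrix} x & a\\ 0 & y\end{pmatrix}$ and $\eta_a=\begin{pmatrix} y & -a\\ 0 & x\end{pmatrix}$, viewed as $A$-linear maps $A^2\to A^2$ acting on column vectors, and set $G_a=\operatorname{Coker}\gamma_a$, $H_a=\operatorname{Coker}\eta_a$. *)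

theory Defs
  imports Main
begin

text \<open>Ideals of a commutative ring (type-class idiom; the ring is the whole type 'a).\<close>
definition is_ideal :: "'a::comm_ring_1 set \<Rightarrow> bool" where
  "is_ideal I \<longleftrightarrow> 0 \<in> I \<and> (\<forall>u\<in>I. \<forall>v\<in>I. u + v \<in> I) \<and> (\<forall>r. \<forall>u\<in>I. r * u \<in> I)"

definition gen_ideal :: "'a::comm_ring_1 set \<Rightarrow> 'a set" where
  "gen_ideal F = {s. \<exists>c. s = (\<Sum>f\<in>F. c f * f)}"

definition noetherian_ring :: "'a::comm_ring_1 itself \<Rightarrow> bool" where
  "noetherian_ring _ \<longleftrightarrow> (\<forall>I::'a set. is_ideal I \<longrightarrow> (\<exists>F. finite F \<and> I = gen_ideal F))"

definition maximal_ideal :: "'a::comm_ring_1 set \<Rightarrow> bool" where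
  "maximal_ideal M \<longleftrightarrow> is_ideal M \<and> M \<noteq> UNIV \<and>
     (\<forall>J. is_ideal J \<and> M \<subseteq> J \<longrightarrow> J = M \<or> J = UNIV)"

definition local_ring :: "'a::comm_ring_1 itself \<Rightarrow> bool" where
  "local_ring _ \<longleftrightarrow> (\<exists>!M::'a set. maximal_ideal M)"

definition ann :: "'a::comm_ring_1 \<Rightarrow> 'a set" where
  "ann x = {r. r * x = 0}"

definition principal :: "'a::comm_ring_1 \<Rightarrow> 'a set" where
  "principal x = {x * c | c. True}"

definition nonunit :: "'a::comm_ring_1 \<Rightarrow> bool" where
  "nonunit x \<longleftrightarrow> \<not> (x dvd 1)"

definition exact_pair :: "'a::comm_ring_1 \<Rightarrow> 'a \<Rightarrow> bool" where
  "exact_pair x y \<longleftrightarrow> nonunit x \<and> nonunit y \<and> ann x = principal y \<and> ann y = principal x"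

definition regular_exact_pair :: "'a::comm_ring_1 \<Rightarrow> 'a \<Rightarrow> bool" where
  "regular_exact_pair x y \<longleftrightarrow> exact_pair x y \<and> principal x \<inter> principal y = {0}"

text \<open>a is weakly regular on A/(x,y): multiplication by a on A/(x,y) is injective.\<close>
definition weakly_regular_mod :: "'a::comm_ring_1 \<Rightarrow> 'a \<Rightarrow> 'a \<Rightarrow> bool" where
  "weakly_regular_mod a x y \<longleftrightarrow>
     (\<forall>r s. a * r - a * s \<in> gen_ideal {x, y} \<longrightarrow> r - s \<in> gen_ideal {x, y})"

text \<open>Free module A^2 as pairs (column vectors), with its operations.\<close>
definition vadd :: "'a::comm_ring_1 \<times> 'a \<Rightarrow> 'a \<times> 'a \<Rightarrow> 'a \<times> 'a" where
  "vadd u v = (fst u + fst v, snd u + snd v)"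

definition vsub :: "'a::comm_ring_1 \<times> 'a \<Rightarrow> 'a \<times> 'a \<Rightarrow> 'a \<times> 'a" where
  "vsub u v = (fst u - fst v, snd u - snd v)"

definition vscale :: "'a::comm_ring_1 \<Rightarrow> 'a \<times> 'a \<Rightarrow> 'a \<times> 'a" where
  "vscale r u = (r * fst u, r * snd u)"

text \<open>Action of the 2x2 matrix [[p, q], [r, s]] on column vectors.\<close>
definition mat2 :: "'a::comm_ring_1 \<Rightarrow> 'a \<Rightarrow> 'a \<Rightarrow> 'a \<Rightarrow> 'a \<times> 'a \<Rightarrow> 'a \<times> 'a" where
  "mat2 p q r s v = (p * fst v + q * snd v, r * fst v + s * snd v)"

definition gamma :: "'a::comm_ring_1 \<Rightarrow> 'a \<Rightarrow> 'a \<Rightarrow> 'a \<times> 'a \<Rightarrow> 'a \<times> 'a" where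
  "gamma x y a = mat2 x a 0 y"

definition eta :: "'a::comm_ring_1 \<Rightarrow> 'a \<Rightarrow> 'a \<Rightarrow> 'a \<times> 'a \<Rightarrow> 'a \<times> 'a" where
  "eta x y a = mat2 y (- a) 0 x"

text \<open>Cokernel of an endomorphism phi of A^2: the quotient A^2 / im phi.
  Elements are cosets; cls phi v is the class of v.\<close>
definition cls :: "('a::comm_ring_1 \<times> 'a \<Rightarrow> 'a \<times> 'a) \<Rightarrow> 'a \<times> 'a \<Rightarrow> ('a \<times> 'a) set" where
  "cls phi v = {w. vsub w v \<in> range phi}"

definition coker :: "('a::comm_ring_1 \<times> 'a \<Rightarrow> 'a \<times> 'a) \<Rightarrow> ('a \<times> 'a) set set" where
  "coker phi = range (cls phi)"

text \<open>Isomorphism of A-modules Coker phi and Coker psi: a bijection of the coset sets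
  compatible with addition and scalar multiplication of cosets (defined via representatives).\<close>
definition coker_iso :: "('a::comm_ring_1 \<times> 'a \<Rightarrow> 'a \<times> 'a) \<Rightarrow> ('a \<times> 'a \<Rightarrow> 'a \<times> 'a) \<Rightarrow> bool" where
  "coker_iso phi psi \<longleftrightarrow> (\<exists>f. bij_betw f (coker phi) (coker psi) \<and>
     (\<forall>u v u' v'. f (cls phi u) = cls psi u' \<longrightarrow> f (cls phi v) = cls psi v' \<longrightarrow>
        f (cls phi (vadd u v)) = cls psi (vadd u' v')) \<and>
     (\<forall>r u u'. f (cls phi u) = cls psi u' \<longrightarrow> f (cls phi (vscale r u)) = cls psi (vscale r u')))"

end

theory Submission
  imports Defs
begin

text \<open>An isomorphism \<open>G\<^sub>a \<cong> G\<^sub>a\<^sub>b\<close> lifts to a \<open>2\<times>2\<close> matrix \<open>P\<close> that maps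
  \<open>im \<gamma>\<^sub>a\<close> into \<open>im \<gamma>\<^sub>a\<^sub>b\<close> and is onto modulo \<open>im \<gamma>\<^sub>a\<^sub>b\<close>. All entries of \<open>\<gamma>\<^sub>a\<^sub>b\<close>
  are non-units, so \<open>P\<close> is onto modulo the maximal ideal \<open>m\<close>. Applying \<open>P\<close> to the relation
  \<open>(a, y)\<close> of \<open>G\<^sub>a\<close> and using that \<open>a\<close> is weakly regular on \<open>A/(x,y)\<close> puts the first column
  of \<open>P\<close> into \<open>m\<close>; modulo \<open>m\<close>, \<open>P\<close> then has rank at most one and cannot be onto.
  Since \<open>\<eta>\<^sub>c\<close> is \<open>\<gamma>\<^sub>-\<^sub>c\<close> for the pair \<open>(y, x)\<close>, part (b) is part (a) for that pair.\<close>

lemma is_ideal_principal: "is_ideal (principal r)"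
  unfolding is_ideal_def principal_def
proof (intro conjI ballI allI)
  show "0 \<in> {r * c |c. True}" by (auto intro: exI[of _ 0])
next
  fix u v assume "u \<in> {r * c |c. True}" "v \<in> {r * c |c. True}"
  then show "u + v \<in> {r * c |c. True}" by (auto simp: distrib_left[symmetric])
next
  fix s u assume "u \<in> {r * c |c. True}"
  then show "s * u \<in> {r * c |c. True}" by (auto simp: mult.left_commute)
qed

lemma is_ideal_Union_chain:
  assumes "C \<noteq> {}" "subset.chain {I. is_ideal I} C"
  shows "is_ideal (\<Union>C)"
proof -
  have ideals: "\<And>I. I \<in> C \<Longrightarrow> is_ideal I"
    and comparable: "\<And>I J. I \<in> C \<Longrightarrow> J \<in> C \<Longrightarrow> I \<subseteq> J \<or> J \<subseteq> I"
    using assms(2) unfolding subset.chain_def by auto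
  show ?thesis
    unfolding is_ideal_def
  proof (intro conjI ballI allI)
    show "0 \<in> \<Union>C" using assms(1) ideals unfolding is_ideal_def by blast
  next
    fix u v assume "u \<in> \<Union>C" "v \<in> \<Union>C"
    then obtain I J where "I \<in> C" "u \<in> I" "J \<in> C" "v \<in> J" by blast
    then show "u + v \<in> \<Union>C"
      using comparable[of I J] ideals unfolding is_ideal_def by blast
  next
    fix s u assume "u \<in> \<Union>C"
    then show "s * u \<in> \<Union>C" using ideals unfolding is_ideal_def by blast
  qed
qed

lemma is_ideal_UNIV_iff: "is_ideal I \<Longrightarrow> I = UNIV \<longleftrightarrow> 1 \<in> I"
  unfolding is_ideal_def by (metis UNIV_I UNIV_eq_I mult_1_right)

lemma nonunit_in_maximal_ideal:
  fixes r :: "'a::comm_ring_1"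
  assumes "\<not> r dvd 1"
  obtains M where "maximal_ideal M" "r \<in> M"
proof -
  let ?S = "{I::'a set. is_ideal I \<and> 1 \<notin> I \<and> r \<in> I}"
  have "1 \<notin> principal r"
    using assms unfolding principal_def by (auto simp: dvd_def)
  moreover have "r \<in> principal r"
    unfolding principal_def by (auto intro: exI[of _ 1])
  ultimately have principal_in: "principal r \<in> ?S"
    using is_ideal_principal by blast
  have "\<exists>M\<in>?S. \<forall>J\<in>?S. M \<subseteq> J \<longrightarrow> J = M"
  proof (rule subset_Zorn_nonempty)
    show "?S \<noteq> {}" using principal_in by blast
  next
    fix C assume C: "C \<noteq> {}" "subset.chain ?S C"
    then have "subset.chain {I. is_ideal I} C"
      unfolding subset.chain_def by blast
    then have "is_ideal (\<Union>C)"
      by (rule is_ideal_Union_chain[OF C(1)])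
    moreover have "1 \<notin> \<Union>C" "r \<in> \<Union>C"
      using C unfolding subset.chain_def by auto
    ultimately show "\<Union>C \<in> ?S" by blast
  qed
  then obtain M where M: "M \<in> ?S" and maximal: "\<forall>J\<in>?S. M \<subseteq> J \<longrightarrow> J = M"
    by blast
  have "J = M \<or> J = UNIV" if "is_ideal J" "M \<subseteq> J" for J
    using that M maximal is_ideal_UNIV_iff[OF that(1)] by blast
  then have "maximal_ideal M"
    using M is_ideal_UNIV_iff[of M] unfolding maximal_ideal_def by blast
  with M that show thesis by blast
qed

lemma local_ring_nonunits_ideal:
  assumes "local_ring TYPE('a::comm_ring_1)"
  shows "is_ideal {r::'a. \<not> r dvd 1}"
proof -
  obtain M :: "'a set" where M: "maximal_ideal M" and unique: "\<And>N. maximal_ideal N \<Longrightarrow> N = M"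
    using assms unfolding local_ring_def by blast
  have M_ideal: "is_ideal M" and "M \<noteq> UNIV"
    using M unfolding maximal_ideal_def by blast+
  then have one_notin: "1 \<notin> M"
    using is_ideal_UNIV_iff[OF M_ideal] by blast
  have "\<not> u dvd 1" if "u \<in> M" for u
  proof
    assume "u dvd 1"
    then obtain v where "1 = u * v" by (rule dvdE)
    moreover have "v * u \<in> M"
      using M_ideal that unfolding is_ideal_def by blast
    ultimately show False
      using one_notin by (simp add: mult.commute)
  qed
  moreover have "r \<in> M" if "\<not> r dvd 1" for r
    using nonunit_in_maximal_ideal[OF that] unique by blast
  ultimately have "M = {r. \<not> r dvd 1}" by auto
  with M_ideal show ?thesis by simp
qed

lemma nonunit_mult: "\<not> (t::'a::comm_ring_1) dvd 1 \<Longrightarrow> \<not> (s * t) dvd 1"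
  using dvd_mult_right by blast

lemma local_ring_nonunit_add:
  fixes s t :: "'a::comm_ring_1"
  assumes "local_ring TYPE('a)" "\<not> s dvd 1" "\<not> t dvd 1"
  shows "\<not> (s + t) dvd 1"
proof -
  have "\<forall>u\<in>{r::'a. \<not> r dvd 1}. \<forall>v\<in>{r. \<not> r dvd 1}. u + v \<in> {r. \<not> r dvd 1}"
    using local_ring_nonunits_ideal[OF assms(1)] unfolding is_ideal_def by (elim conjE)
  with assms(2,3) show ?thesis by simp
qed

lemma local_ring_nonunit_diff:
  fixes s t :: "'a::comm_ring_1"
  assumes "local_ring TYPE('a)" "\<not> s dvd 1" "\<not> t dvd 1"
  shows "\<not> (s - t) dvd 1"
  using local_ring_nonunit_add[OF assms(1,2) nonunit_mult[OF assms(3), of "- 1"]] by simp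

lemma local_ring_unit_if_nonunit_diff_one:
  fixes s :: "'a::comm_ring_1"
  assumes "local_ring TYPE('a)" "\<not> (s - 1) dvd 1"
  shows "s dvd 1"
proof (rule ccontr)
  assume "\<not> s dvd 1"
  from local_ring_nonunit_diff[OF assms(1) this assms(2)] show False by simp
qed

lemma gen_ideal_pair_iff: "t \<in> gen_ideal {x, y} \<longleftrightarrow> (\<exists>r s. t = r * x + s * y)"
proof (cases "x = y")
  case True
  have "(\<exists>c. t = c x * x) \<longleftrightarrow> (\<exists>r s. t = r * x + s * x)"
  proof
    assume "\<exists>r s. t = r * x + s * x"
    then obtain r s where "t = r * x + s * x" by blast
    then show "\<exists>c. t = c x * x"
      by (intro exI[of _ "\<lambda>_. r + s"]) (simp add: distrib_right)
  next
    assume "\<exists>c. t = c x * x"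
    then obtain c where "t = c x * x" by blast
    then show "\<exists>r s. t = r * x + s * x"
      by (intro exI[of _ "c x"] exI[of _ 0]) simp
  qed
  with True show ?thesis unfolding gen_ideal_def by simp
next
  case False
  have "(\<exists>c. t = c x * x + c y * y) \<longleftrightarrow> (\<exists>r s. t = r * x + s * y)"
  proof
    assume "\<exists>r s. t = r * x + s * y"
    then obtain r s where "t = r * x + s * y" by blast
    with False show "\<exists>c. t = c x * x + c y * y"
      by (intro exI[of _ "\<lambda>z. if z = x then r else s"]) simp
  qed blast
  with False show ?thesis unfolding gen_ideal_def by simp
qed

lemma gen_ideal_pair_nonunit:
  fixes x y t :: "'a::comm_ring_1"
  assumes "local_ring TYPE('a)" "\<not> x dvd 1" "\<not> y dvd 1" "t \<in> gen_ideal {x, y}"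
  shows "\<not> t dvd 1"
  using assms(4) local_ring_nonunit_add[OF assms(1) nonunit_mult[OF assms(2)] nonunit_mult[OF assms(3)]]
  unfolding gen_ideal_pair_iff by blast

lemma gen_ideal_pair_uminus: "- t \<in> gen_ideal {x, y} \<longleftrightarrow> t \<in> gen_ideal {x, y}"
proof -
  have "- t = (- r) * x + (- s) * y" if "t = r * x + s * y" for t r s :: 'a
    using that by simp
  then show ?thesis
    unfolding gen_ideal_pair_iff by (metis minus_minus)
qed

lemma weakly_regular_mod_commute: "weakly_regular_mod a y x \<longleftrightarrow> weakly_regular_mod a x y"
  by (simp add: weakly_regular_mod_def insert_commute)

lemma weakly_regular_mod_uminus:
  assumes "weakly_regular_mod a x y"
  shows "weakly_regular_mod (- a) x y"
  unfolding weakly_regular_mod_def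
proof (intro allI impI)
  fix r s
  assume "- a * r - - a * s \<in> gen_ideal {x, y}"
  then have "a * s - a * r \<in> gen_ideal {x, y}"
    by (simp add: algebra_simps)
  then have "s - r \<in> gen_ideal {x, y}"
    using assms unfolding weakly_regular_mod_def by blast
  then show "r - s \<in> gen_ideal {x, y}"
    using gen_ideal_pair_uminus[of "s - r"] by simp
qed

lemma eta_eq_gamma: "eta x y a = gamma y x (- a)"
  unfolding eta_def gamma_def ..

lemma mat2_vadd: "mat2 p q r s (vadd u v) = vadd (mat2 p q r s u) (mat2 p q r s v)"
  unfolding mat2_def vadd_def by (simp add: algebra_simps)

lemma mat2_vsub: "mat2 p q r s (vsub u v) = vsub (mat2 p q r s u) (mat2 p q r s v)"
  unfolding mat2_def vsub_def by (simp add: algebra_simps)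

lemma cls_mat2_eq_iff:
  "cls (mat2 p q r s) u = cls (mat2 p q r s) v \<longleftrightarrow> vsub u v \<in> range (mat2 p q r s)"
proof
  assume "cls (mat2 p q r s) u = cls (mat2 p q r s) v"
  moreover have "u \<in> cls (mat2 p q r s) u"
    unfolding cls_def vsub_def mat2_def by (auto intro!: image_eqI[of _ _ "(0, 0)"])
  ultimately show "vsub u v \<in> range (mat2 p q r s)"
    unfolding cls_def by blast
next
  assume "vsub u v \<in> range (mat2 p q r s)"
  then obtain d where d: "vsub u v = mat2 p q r s d" by blast
  have "vsub w u \<in> range (mat2 p q r s) \<longleftrightarrow> vsub w v \<in> range (mat2 p q r s)" for w
  proof
    assume "vsub w u \<in> range (mat2 p q r s)"
    then obtain c where "vsub w u = mat2 p q r s c" by blast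
    moreover have "vsub w v = vadd (vsub w u) (vsub u v)"
      by (simp add: vadd_def vsub_def)
    ultimately have "vsub w v = mat2 p q r s (vadd c d)"
      by (simp add: d mat2_vadd)
    then show "vsub w v \<in> range (mat2 p q r s)" by blast
  next
    assume "vsub w v \<in> range (mat2 p q r s)"
    then obtain c where "vsub w v = mat2 p q r s c" by blast
    moreover have "vsub w u = vsub (vsub w v) (vsub u v)"
      by (simp add: vsub_def)
    ultimately have "vsub w u = mat2 p q r s (vsub c d)"
      by (simp add: d mat2_vsub)
    then show "vsub w u \<in> range (mat2 p q r s)" by blast
  qed
  then show "cls (mat2 p q r s) u = cls (mat2 p q r s) v"
    unfolding cls_def by blast
qed

lemma coker_iso_lift:
  assumes "coker_iso (mat2 p q r s) (mat2 p' q' r' s')"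
  obtains k l m n where "\<And>v. mat2 k l m n (mat2 p q r s v) \<in> range (mat2 p' q' r' s')"
    and "\<And>t. \<exists>v. vsub (mat2 k l m n v) t \<in> range (mat2 p' q' r' s')"
proof -
  let ?\<phi> = "mat2 p q r s" and ?\<psi> = "mat2 p' q' r' s'"
  obtain f where bij: "bij_betw f (coker ?\<phi>) (coker ?\<psi>)"
    and f_add: "\<And>u v u' v'. f (cls ?\<phi> u) = cls ?\<psi> u' \<Longrightarrow> f (cls ?\<phi> v) = cls ?\<psi> v' \<Longrightarrow>
        f (cls ?\<phi> (vadd u v)) = cls ?\<psi> (vadd u' v')"
    and f_scale: "\<And>c u u'. f (cls ?\<phi> u) = cls ?\<psi> u' \<Longrightarrow> f (cls ?\<phi> (vscale c u)) = cls ?\<psi> (vscale c u')"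
    using assms unfolding coker_iso_def by blast
  have "\<exists>u'. f (cls ?\<phi> u) = cls ?\<psi> u'" for u
    using bij_betwE[OF bij] unfolding coker_def by blast
  then obtain w z where w: "f (cls ?\<phi> (1, 0)) = cls ?\<psi> w" and z: "f (cls ?\<phi> (0, 1)) = cls ?\<psi> z"
    by meson
  let ?P = "mat2 (fst w) (fst z) (snd w) (snd z)"
  have f_eq: "f (cls ?\<phi> v) = cls ?\<psi> (?P v)" for v
  proof -
    have "v = vadd (vscale (fst v) (1, 0)) (vscale (snd v) (0, 1))"
      "?P v = vadd (vscale (fst v) w) (vscale (snd v) z)"
      by (simp_all add: vadd_def vscale_def mat2_def mult.commute)
    then show ?thesis
      using f_add[OF f_scale[OF w] f_scale[OF z]] by metis
  qed
  have "?P (?\<phi> v) \<in> range ?\<psi>" for v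
  proof -
    have "cls ?\<phi> (?\<phi> v) = cls ?\<phi> (0, 0)"
      unfolding cls_mat2_eq_iff by (simp add: vsub_def)
    then have "cls ?\<psi> (?P (?\<phi> v)) = cls ?\<psi> (?P (0, 0))"
      by (simp only: f_eq[symmetric])
    then show ?thesis
      unfolding cls_mat2_eq_iff by (simp add: vsub_def mat2_def)
  qed
  moreover have "\<exists>v. vsub (?P v) t \<in> range ?\<psi>" for t
  proof -
    have "cls ?\<psi> t \<in> f ` coker ?\<phi>"
      using bij unfolding bij_betw_def coker_def by simp
    then obtain v where "cls ?\<psi> t = f (cls ?\<phi> v)"
      unfolding coker_def by blast
    then have "cls ?\<psi> (?P v) = cls ?\<psi> t"
      by (simp add: f_eq)
    then show ?thesis
      unfolding cls_mat2_eq_iff by blast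
  qed
  ultimately show thesis by (rule that)
qed

lemma local_ring_mat2_not_onto_mod_nonunits:
  fixes k l m n :: "'a::comm_ring_1"
  assumes local: "local_ring TYPE('a)" and "\<not> k dvd 1" "\<not> m dvd 1"
    and onto: "\<And>t. \<exists>v. \<not> fst (vsub (mat2 k l m n v) t) dvd 1 \<and> \<not> snd (vsub (mat2 k l m n v) t) dvd 1"
  shows False
proof -
  obtain v where v1: "\<not> (k * fst v + l * snd v - 1) dvd 1" and v2: "\<not> (m * fst v + n * snd v) dvd 1"
    using onto[of "(1, 0)"] by (auto simp: vsub_def mat2_def)
  obtain w where w1: "\<not> (m * fst w + n * snd w - 1) dvd 1"
    using onto[of "(0, 1)"] by (auto simp: vsub_def mat2_def)
  have "\<not> (l * snd v - 1) dvd 1"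
    using local_ring_nonunit_diff[OF local v1 nonunit_mult[OF assms(2), of "fst v"]] by (simp add: algebra_simps)
  then have unit_lv: "(l * snd v) dvd 1"
    by (rule local_ring_unit_if_nonunit_diff_one[OF local])
  have "\<not> (n * snd w - 1) dvd 1"
    using local_ring_nonunit_diff[OF local w1 nonunit_mult[OF assms(3), of "fst w"]] by (simp add: algebra_simps)
  then have unit_nw: "(n * snd w) dvd 1"
    by (rule local_ring_unit_if_nonunit_diff_one[OF local])
  have "\<not> (n * snd v) dvd 1"
    using local_ring_nonunit_diff[OF local v2 nonunit_mult[OF assms(3), of "fst v"]] by (simp add: algebra_simps)
  then have "\<not> ((l * snd w) * (n * snd v)) dvd 1"
    by (rule nonunit_mult)
  moreover have "(l * snd v) * (n * snd w) dvd 1"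
    using mult_dvd_mono[OF unit_lv unit_nw] by simp
  ultimately show False
    by (simp add: ac_simps)
qed

lemma range_gamma_nonunit:
  fixes x y c :: "'a::comm_ring_1"
  assumes local: "local_ring TYPE('a)" and "\<not> x dvd 1" "\<not> y dvd 1" "\<not> c dvd 1"
    and "u \<in> range (gamma x y c)"
  shows "\<not> fst u dvd 1 \<and> \<not> snd u dvd 1"
proof -
  obtain d where "u = (x * fst d + c * snd d, y * snd d)"
    using assms(5) unfolding gamma_def mat2_def by auto
  then show ?thesis
    using local_ring_nonunit_add[OF local nonunit_mult[OF assms(2), of "fst d"] nonunit_mult[OF assms(4), of "snd d"]]
      nonunit_mult[OF assms(3), of "snd d"] by (simp add: mult.commute)
qed

lemma gamma_lift_first_column_nonunit:
  fixes x y a b k l m n :: "'a::comm_ring_1"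
  assumes local: "local_ring TYPE('a)" and x: "\<not> x dvd 1" and y: "\<not> y dvd 1" and b: "\<not> b dvd 1"
    and regular: "weakly_regular_mod a x y"
    and "mat2 k l m n (a, y) \<in> range (gamma x y (a * b))"
  shows "\<not> k dvd 1 \<and> \<not> m dvd 1"
proof -
  obtain c d where c: "k * a + l * y = x * c + a * b * d" and d: "m * a + n * y = y * d"
    using assms(6) unfolding gamma_def mat2_def by auto
  have "a * k - a * (b * d) = c * x + (- l) * y"
    using c by (simp add: algebra_simps)
  then have "k - b * d \<in> gen_ideal {x, y}"
    using regular unfolding weakly_regular_mod_def gen_ideal_pair_iff by blast
  then have "\<not> (k - b * d + b * d) dvd 1"
    by (intro local_ring_nonunit_add[OF local] gen_ideal_pair_nonunit[OF local x y]
        nonunit_mult[OF b, of d, unfolded mult.commute[of d]])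
  moreover have "a * m - a * 0 = 0 * x + (d - n) * y"
    using d by (simp add: algebra_simps)
  then have "m - 0 \<in> gen_ideal {x, y}"
    using regular unfolding weakly_regular_mod_def gen_ideal_pair_iff by blast
  then have "\<not> m dvd 1"
    using gen_ideal_pair_nonunit[OF local x y] by simp
  ultimately show ?thesis by simp
qed

lemma gamma_coker_not_iso:
  fixes x y a b :: "'a::comm_ring_1"
  assumes local: "local_ring TYPE('a)" and x: "\<not> x dvd 1" and y: "\<not> y dvd 1" and b: "\<not> b dvd 1"
    and regular: "weakly_regular_mod a x y"
  shows "\<not> coker_iso (gamma x y a) (gamma x y (a * b))"
proof
  assume "coker_iso (gamma x y a) (gamma x y (a * b))"
  then obtain k l m n where relations: "\<And>v. mat2 k l m n (gamma x y a v) \<in> range (gamma x y (a * b))"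
    and onto: "\<And>t. \<exists>v. vsub (mat2 k l m n v) t \<in> range (gamma x y (a * b))"
    unfolding gamma_def by (rule coker_iso_lift) blast
  have "mat2 k l m n (a, y) \<in> range (gamma x y (a * b))"
    using relations[of "(0, 1)"] by (simp add: gamma_def mat2_def)
  then have "\<not> k dvd 1" "\<not> m dvd 1"
    using gamma_lift_first_column_nonunit[OF local x y b regular] by blast+
  moreover have "\<not> (a * b) dvd 1"
    using nonunit_mult[OF b] by (simp add: mult.commute)
  ultimately show False
    using local_ring_mat2_not_onto_mod_nonunits[OF local] onto range_gamma_nonunit[OF local x y]
    by meson
qed

theorem theorem5p2:
  fixes x y a b :: "'a::comm_ring_1"
  assumes "noetherian_ring TYPE('a)"
    and "local_ring TYPE('a)"
    and "regular_exact_pair x y"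
    and "weakly_regular_mod a x y"
    and "nonunit b"
  shows "\<not> coker_iso (gamma x y a) (gamma x y (a * b)) \<and>
         \<not> coker_iso (eta x y a) (eta x y (a * b))"
proof
  have x: "\<not> x dvd 1" and y: "\<not> y dvd 1" and b: "\<not> b dvd 1"
    using assms(3,5) unfolding regular_exact_pair_def exact_pair_def nonunit_def by auto
  show "\<not> coker_iso (gamma x y a) (gamma x y (a * b))"
    using gamma_coker_not_iso[OF assms(2) x y b assms(4)] .
  have "weakly_regular_mod (- a) y x"
    using weakly_regular_mod_uminus[OF assms(4)] by (simp add: weakly_regular_mod_commute)
  then have "\<not> coker_iso (gamma y x (- a)) (gamma y x (- a * b))"
    by (rule gamma_coker_not_iso[OF assms(2) y x b])
  then show "\<not> coker_iso (eta x y a) (eta x y (a * b))"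
    by (simp add: eta_eq_gamma)
qed

end
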